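(* Let $\mathcal W$ be an operator space, $X\in\mathcal W^{n\times n}$, $X'\in\mathcal W^{n'\times n'}$, and let $M,M'\in\mathbb N$ be such that $Mn=M'n'$ is the least common multiple of $n$ and $n'$. Then $\bigl\|\bigoplus_{\alpha=1}^MX-\bigoplus_{\beta=1}^{M'}X'\bigr\|_{Mn}=0$ if and only if there exists $Y\in\mathcal W^{d\times d}$ for some $d$, and $m,m'\in\mathbb N$, such that $X=\bigoplus_{\alpha=1}^mY$ and $X'=\bigoplus_{\beta=1}^{m'}Y$.
   Context: An operator space is a complex Banach space $\mathcal W$ with norms $\|\cdot\|_n$ on $\mathcal W^{n\times n}$ such that $\|X\oplus Y\|_{n+m}=\max\{\|X\|_n,\|Y\|_m\}$ and $\|TXS\|_n\le\|T\|\|X\|_n\|S\|$ for $T,S\in\mathbb C^{n\times n}$, where $X\oplus Y=\begin{bmatrix}X&0\\0&Y\end{bmatrix}$ and $\bigoplus_{\alpha=1}^mY$ denotes the block diagonal matrix with $m$ diagonal blocks equal to $Y$. *)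

theory Defs
  imports "HOL-Analysis.Analysis"
begin

text \<open>Matrices are modelled as functions nat => nat => _. The space W^{n x n}
  is the set of those matrices whose entries vanish outside the index range {0..<n}^2.\<close>

definition mats :: "nat \<Rightarrow> (nat \<Rightarrow> nat \<Rightarrow> 'w::zero) set" where
  "mats n = {X. \<forall>i j. (n \<le> i \<or> n \<le> j) \<longrightarrow> X i j = 0}"

text \<open>Complex Banach space: a real Banach space (type class banach) together with a
  complex scalar multiplication sc extending the real one and compatible with the norm.\<close>

definition complex_banach :: "(complex \<Rightarrow> 'w::banach \<Rightarrow> 'w) \<Rightarrow> bool" where
  "complex_banach sc \<longleftrightarrow>
     (\<forall>a x y. sc a (x + y) = sc a x + sc a y) \<and>
     (\<forall>a b x. sc (a + b) x = sc a x + sc b x) \<and>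
     (\<forall>a b x. sc a (sc b x) = sc (a * b) x) \<and>
     (\<forall>r x. sc (complex_of_real r) x = r *\<^sub>R x) \<and>
     (\<forall>a x. norm (sc a x) = cmod a * norm x)"

definition vnorm :: "nat \<Rightarrow> (nat \<Rightarrow> complex) \<Rightarrow> real" where
  "vnorm n v = sqrt (\<Sum>i<n. (cmod (v i))\<^sup>2)"

definition cmat_norm :: "nat \<Rightarrow> (nat \<Rightarrow> nat \<Rightarrow> complex) \<Rightarrow> real" where
  "cmat_norm n T = Sup {vnorm n (\<lambda>i. \<Sum>j<n. T i j * v j) | v. vnorm n v \<le> 1}"

definition sandwich ::
  "(complex \<Rightarrow> 'w::banach \<Rightarrow> 'w) \<Rightarrow> nat \<Rightarrow> (nat \<Rightarrow> nat \<Rightarrow> complex)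
     \<Rightarrow> (nat \<Rightarrow> nat \<Rightarrow> 'w) \<Rightarrow> (nat \<Rightarrow> nat \<Rightarrow> complex) \<Rightarrow> (nat \<Rightarrow> nat \<Rightarrow> 'w)" where
  "sandwich sc n T X S = (\<lambda>i j. if i < n \<and> j < n
      then (\<Sum>k<n. \<Sum>l<n. sc (T i k * S l j) (X k l)) else 0)"

definition dsum :: "nat \<Rightarrow> (nat \<Rightarrow> nat \<Rightarrow> 'w::zero) \<Rightarrow> nat \<Rightarrow> (nat \<Rightarrow> nat \<Rightarrow> 'w) \<Rightarrow> (nat \<Rightarrow> nat \<Rightarrow> 'w)" where
  "dsum n X m Y = (\<lambda>i j. if i < n \<and> j < n then X i j
      else if n \<le> i \<and> i < n + m \<and> n \<le> j \<and> j < n + m then Y (i - n) (j - n) else 0)"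

definition bdiag :: "nat \<Rightarrow> nat \<Rightarrow> (nat \<Rightarrow> nat \<Rightarrow> 'w::zero) \<Rightarrow> (nat \<Rightarrow> nat \<Rightarrow> 'w)" where
  "bdiag m d Y = (\<lambda>i j. if i < m * d \<and> j < m * d \<and> i div d = j div d
      then Y (i mod d) (j mod d) else 0)"

definition operator_space ::
  "(complex \<Rightarrow> 'w::banach \<Rightarrow> 'w) \<Rightarrow> (nat \<Rightarrow> (nat \<Rightarrow> nat \<Rightarrow> 'w) \<Rightarrow> real) \<Rightarrow> bool" where
  "operator_space sc N \<longleftrightarrow>
     complex_banach sc \<and>
     (\<forall>X \<in> mats 1. N 1 X = norm (X 0 0)) \<and>
     (\<forall>n. \<forall>X \<in> mats n. N n X \<ge> 0 \<and> (N n X = 0 \<longleftrightarrow> X = (\<lambda>i j. 0))) \<and>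
     (\<forall>n. \<forall>X \<in> mats n. \<forall>Y \<in> mats n. N n (\<lambda>i j. X i j + Y i j) \<le> N n X + N n Y) \<and>
     (\<forall>n a. \<forall>X \<in> mats n. N n (\<lambda>i j. sc a (X i j)) = cmod a * N n X) \<and>
     (\<forall>n m. \<forall>X \<in> mats n. \<forall>Y \<in> mats m. N (n + m) (dsum n X m Y) = max (N n X) (N m Y)) \<and>
     (\<forall>n T S. \<forall>X \<in> mats n.
        N n (sandwich sc n T X S) \<le> cmat_norm n T * N n X * cmat_norm n S)"

end

theory Submission
  imports Defs
begin

text \<open>By definiteness of the norm, the statement is about the equality Z = bdiag M n X =
  bdiag M' n' X' of block diagonal matrices of size L = M n. Such a Z is invariant under the
  simultaneous cyclic shift of rows and columns by n and by n', hence, by B\'ezout, by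
  d = gcd n n'. An entry of Z straddling two d-blocks could then be shifted to straddle two n-blocks
  or two n'-blocks, which is impossible; so Z is block diagonal with d x d blocks, all equal to the
  leading one Y, and X, X' are the corresponding repetitions of Y. The converse is the associativity
  of block repetition.\<close>

lemma bdiag_in_mats: "bdiag m d Y \<in> mats (m * d)"
  unfolding mats_def bdiag_def by auto

lemma bdiag_first_block:
  assumes "0 < M" "i < n" "j < n"
  shows "bdiag M n X i j = X i j"
proof -
  have "n \<le> M * n" using assms(1) by simp
  then have "i < M * n" "j < M * n" using assms(2,3) by linarith+
  then show ?thesis using assms unfolding bdiag_def by simp
qed

lemma bdiag_inj:
  assumes "0 < M" "X \<in> mats n" "Y \<in> mats n" "bdiag M n X = bdiag M n Y"
  shows "X = Y"
proof (intro ext)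
  fix i j
  show "X i j = Y i j"
  proof (cases "i < n \<and> j < n")
    case True
    then show ?thesis using assms bdiag_first_block[of M i n j] by metis
  next
    case False
    then show ?thesis using assms(2,3) unfolding mats_def by auto
  qed
qed

lemma bdiag_bdiag: "bdiag M (m * d) (bdiag m d Y) = bdiag (M * m) d Y"
proof (intro ext)
  fix i j :: nat
  have div_mod: "(x mod (m * d)) div d = x div d mod m" for x
    by (cases "d = 0") (simp_all add: mod_mult2_eq mult.commute)
  have div_div: "x div (m * d) = x div d div m" for x
    by (simp add: div_mult2_eq mult.commute)
  have same_block: "(i div (m * d) = j div (m * d) \<and> i mod (m * d) div d = j mod (m * d) div d)
      \<longleftrightarrow> i div d = j div d"
    unfolding div_mod div_div by (metis div_mult_mod_eq)
  have mod_mod: "x mod (m * d) mod d = x mod d" for x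
    by (simp add: mod_mod_cancel)
  show "bdiag M (m * d) (bdiag m d Y) i j = bdiag (M * m) d Y i j"
  proof (cases "i < M * m * d \<and> j < M * m * d")
    case True
    then have "i mod (m * d) < m * d" "j mod (m * d) < m * d"
      by (metis mod_less_divisor mult.assoc mult_0_right not_less_zero gr0I)+
    then show ?thesis
      using True same_block unfolding bdiag_def mod_mod mult.assoc by presburger
  next
    case False
    then show ?thesis unfolding bdiag_def mult.assoc by auto
  qed
qed

definition block_supported :: "nat \<Rightarrow> nat \<Rightarrow> (nat \<Rightarrow> nat \<Rightarrow> 'w::zero) \<Rightarrow> bool" where
  "block_supported L n Z \<longleftrightarrow> (\<forall>i j. Z i j \<noteq> 0 \<longrightarrow> i < L \<and> j < L \<and> i div n = j div n)"

definition shift_invariant :: "nat \<Rightarrow> (nat \<Rightarrow> nat \<Rightarrow> 'w) \<Rightarrow> nat \<Rightarrow> bool" where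
  "shift_invariant L Z s \<longleftrightarrow> (\<forall>i<L. \<forall>j<L. Z ((i + s) mod L) ((j + s) mod L) = Z i j)"

lemma block_supported_transpose:
  "block_supported L n Z \<Longrightarrow> block_supported L n (\<lambda>i j. Z j i)"
  unfolding block_supported_def by metis

lemma shift_invariant_transpose:
  "shift_invariant L Z s \<Longrightarrow> shift_invariant L (\<lambda>i j. Z j i) s"
  unfolding shift_invariant_def by blast

lemma shift_invariant_0: "shift_invariant L Z 0"
  unfolding shift_invariant_def by simp

lemma shift_invariant_add:
  assumes "shift_invariant L Z s" "shift_invariant L Z t"
  shows "shift_invariant L Z (s + t)"
  unfolding shift_invariant_def
proof (intro allI impI)
  fix i j assume "i < L" "j < L"
  moreover have "(i + s) mod L < L" "(j + s) mod L < L" using \<open>i < L\<close> by simp_all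
  ultimately have "Z (((i + s) mod L + t) mod L) (((j + s) mod L + t) mod L) = Z i j"
    using assms unfolding shift_invariant_def by simp
  then show "Z ((i + (s + t)) mod L) ((j + (s + t)) mod L) = Z i j"
    by (simp add: mod_add_left_eq add.assoc)
qed

lemma shift_invariant_dvd:
  assumes "shift_invariant L Z s" "s dvd t"
  shows "shift_invariant L Z t"
proof -
  obtain k where "t = s * k" using assms(2) by blast
  moreover have "shift_invariant L Z (s * k)"
    by (induction k) (simp_all add: shift_invariant_0 shift_invariant_add assms(1))
  ultimately show ?thesis by simp
qed

lemma shift_invariant_mod_cong:
  assumes "s mod L = t mod L"
  shows "shift_invariant L Z s \<longleftrightarrow> shift_invariant L Z t"
proof -
  have "(i + s) mod L = (i + t) mod L" for i
    using assms by (metis mod_add_right_eq)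
  then show ?thesis unfolding shift_invariant_def by simp
qed

text \<open>Modulo L, the shift by L - n' undoes the shift by n', so B\'ezout's n x = n' y + gcd n n'
  yields a shift congruent to the gcd.\<close>

lemma shift_invariant_gcd:
  assumes "shift_invariant L Z n" "shift_invariant L Z n'" "n' dvd L" "n \<noteq> 0"
  shows "shift_invariant L Z (gcd n n')"
proof (cases "L = 0")
  case True
  then show ?thesis unfolding shift_invariant_def by simp
next
  case False
  then have "n' \<le> L" using assms(3) by (simp add: dvd_imp_le)
  obtain x y where bezout: "n * x = n' * y + gcd n n'"
    using bezout_nat[OF assms(4)] by blast
  have "n' dvd L - n'" using assms(3) by (simp add: dvd_diff_nat)
  then have "shift_invariant L Z (n * x + (L - n') * y)"
    by (intro shift_invariant_add shift_invariant_dvd[OF assms(1)] shift_invariant_dvd[OF assms(2)])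
      (simp_all add: dvd_mult2)
  moreover have "(L - n') * y + n' * y = L * y"
    using \<open>n' \<le> L\<close> by (metis add_mult_distrib le_add_diff_inverse2)
  then have "n * x + (L - n') * y = gcd n n' + L * y"
    using bezout by (simp add: mult.commute)
  ultimately show ?thesis
    using shift_invariant_mod_cong[of "gcd n n' + L * y" L "gcd n n'" Z] by simp
qed

lemma block_supported_bdiag: "block_supported (M * n) n (bdiag M n X)"
  unfolding block_supported_def bdiag_def by auto

lemma shift_invariant_bdiag:
  assumes "0 < n"
  shows "shift_invariant (M * n) (bdiag M n X) n"
  unfolding shift_invariant_def
proof (intro allI impI)
  fix i j assume ij: "i < M * n" "j < M * n"
  have block: "((x + n) mod (M * n)) div n = (x div n + 1) mod M"
    and offset: "((x + n) mod (M * n)) mod n = x mod n" for x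
    using mod_mult2_eq[of "x + n" n M] assms by (simp_all add: mult.commute)
  have "i div n < M" "j div n < M"
    using ij assms by (simp_all add: less_mult_imp_div_less)
  then have "(i div n + 1) mod M = (j div n + 1) mod M \<longleftrightarrow> i div n = j div n"
    by (metis Suc_eq_plus1 less_Suc_eq mod_less mod_self nat_neq_iff Suc_lessI zero_less_Suc)
  moreover have "(x + n) mod (M * n) < M * n" for x
    using ij(1) by (metis mod_less_divisor not_less_zero gr0I)
  ultimately show "bdiag M n X ((i + n) mod (M * n)) ((j + n) mod (M * n)) = bdiag M n X i j"
    unfolding bdiag_def block offset using ij by simp
qed

lemma same_block_imp_less_add:
  assumes "0 < (m::nat)" "i div m = j div m"
  shows "j < i + m"
proof -
  have "j < j div m * m + m"
    using assms(1) by (metis div_mult_mod_eq add_less_cancel_left mod_less_divisor)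
  also have "j div m * m \<le> i" using assms(2) by (metis div_times_less_eq_dividend)
  finally show ?thesis by simp
qed

lemma shift_mod_wrap:
  assumes "s \<le> j" "j < (L::nat)"
  shows "(j + (L - s)) mod L = j - s"
proof -
  have "j + (L - s) = (j - s) + L" using assms by arith
  moreover have "(j - s + L) mod L = j - s"
    using assms(2) by (metis mod_add_self2 mod_less less_imp_diff_less)
  ultimately show ?thesis by (simp only:)
qed

lemma proper_dvd_imp_double_le:
  assumes "m dvd L" "m < (L::nat)"
  shows "2 * m \<le> L"
proof -
  obtain k where "L = m * k" using assms(1) by blast
  with assms(2) have "k \<noteq> 0" "k \<noteq> 1" by auto
  then have "2 \<le> k" by arith
  then show ?thesis using \<open>L = m * k\<close> by simp
qed

text \<open>An entry straddling the d-grid point c is moved by the shift taking c to m (a multiple of d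
  modulo L) onto an entry straddling two m-blocks.\<close>

lemma block_supported_no_crossing:
  fixes Z :: "nat \<Rightarrow> nat \<Rightarrow> 'w::zero"
  assumes "m dvd L" "m < L" "d dvd m" "0 < d"
    and supp: "block_supported L m Z" and inv: "shift_invariant L Z d"
    and nz: "Z i j \<noteq> 0"
  shows "\<not> i div d < j div d"
proof
  assume lt: "i div d < j div d"
  define c where "c = j div d * d"
  have "0 < m" using assms(1,2) by (metis dvd_0_left gr0I less_irrefl)
  have "i < L" "j < L" "i div m = j div m" using supp nz unfolding block_supported_def by blast+
  then have "j < i + m" using same_block_imp_less_add[OF \<open>0 < m\<close>] by blast
  have "c \<le> j" unfolding c_def by (rule div_times_less_eq_dividend)
  have "j - c < d" unfolding c_def using assms(4) by (simp add: minus_div_mult_eq_mod)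
  have "i < c"
  proof (rule ccontr)
    assume "\<not> i < c"
    then have "c div d \<le> i div d" by (simp add: div_le_mono)
    then show False using lt assms(4) unfolding c_def by simp
  qed
  have "2 * m \<le> L" using assms(1,2) by (rule proper_dvd_imp_double_le)
  define t where "t = m + L - c"
  have "d dvd t"
    unfolding t_def c_def using assms(1,3) by (intro dvd_diff_nat dvd_add) auto
  then have "shift_invariant L Z t" by (rule shift_invariant_dvd[OF inv])
  then have "Z ((i + t) mod L) ((j + t) mod L) \<noteq> 0"
    using nz \<open>i < L\<close> \<open>j < L\<close> unfolding shift_invariant_def by simp
  moreover have "(i + t) mod L = i + m - c" "(j + t) mod L = j + m - c"
  proof -
    have "i + t = (i + m - c) + L" "j + t = (j + m - c) + L"
      unfolding t_def using \<open>c \<le> j\<close> \<open>j < i + m\<close> \<open>j < L\<close> by simp_all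
    moreover have "i + m - c < L" "j + m - c < L"
      using \<open>i < c\<close> \<open>j - c < d\<close> \<open>c \<le> j\<close> \<open>2 * m \<le> L\<close> dvd_imp_le[OF assms(3) \<open>0 < m\<close>]
      by arith+
    ultimately show "(i + t) mod L = i + m - c" "(j + t) mod L = j + m - c" by simp_all
  qed
  ultimately have "(i + m - c) div m = (j + m - c) div m"
    using supp unfolding block_supported_def by metis
  moreover have "(i + m - c) div m = 0"
    using \<open>i < c\<close> \<open>0 < m\<close> by (simp add: div_eq_0_iff)
  moreover have "(j + m - c) div m \<noteq> 0"
    using \<open>c \<le> j\<close> \<open>0 < m\<close> by (simp add: div_eq_0_iff)
  ultimately show False by simp
qed

lemma block_supported_gcd:
  fixes Z :: "nat \<Rightarrow> nat \<Rightarrow> 'w::zero"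
  assumes "n dvd L" "n' dvd L"
    and "block_supported L n Z" "block_supported L n' Z" "shift_invariant L Z (gcd n n')"
  shows "block_supported L (gcd n n') Z"
proof -
  define d where "d = gcd n n'"
  have "d dvd n" "d dvd n'" unfolding d_def by simp_all
  have no_crossing: "\<not> i div d < j div d"
    if W: "block_supported L n W" "block_supported L n' W" "shift_invariant L W d" "W i j \<noteq> 0"
    for W :: "nat \<Rightarrow> nat \<Rightarrow> 'w" and i j
  proof -
    consider "n < L" | "n' < L" | "n = L" "n' = L"
    proof -
      have "0 < L" using W(1,4) unfolding block_supported_def by (metis gr0I not_less_zero)
      then have "n \<le> L" "n' \<le> L" using assms(1,2) by (simp_all add: dvd_imp_le)
      then show ?thesis using that by linarith
    qed
    then show ?thesis
    proof cases
      case 1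
      then have "0 < d" using assms(1) unfolding d_def by (cases "n = 0") auto
      show ?thesis by (rule block_supported_no_crossing[OF assms(1) 1 \<open>d dvd n\<close> \<open>0 < d\<close> W(1,3,4)])
    next
      case 2
      then have "0 < d" using assms(2) unfolding d_def by (cases "n' = 0") auto
      show ?thesis by (rule block_supported_no_crossing[OF assms(2) 2 \<open>d dvd n'\<close> \<open>0 < d\<close> W(2,3,4)])
    next
      case 3
      have "j < L" using W(1,4) unfolding block_supported_def by blast
      then show ?thesis using 3 unfolding d_def by simp
    qed
  qed
  show ?thesis
    unfolding block_supported_def d_def[symmetric]
  proof (intro allI impI)
    fix i j assume nz: "Z i j \<noteq> 0"
    have inv: "shift_invariant L Z d" using assms(5) unfolding d_def .
    have "\<not> i div d < j div d" by (rule no_crossing[OF assms(3,4) inv nz])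
    moreover have "\<not> j div d < i div d"
      using no_crossing[OF block_supported_transpose[OF assms(3)]
          block_supported_transpose[OF assms(4)] shift_invariant_transpose[OF inv]] nz
      by blast
    moreover have "i < L \<and> j < L" using nz assms(3) unfolding block_supported_def by blast
    ultimately show "i < L \<and> j < L \<and> i div d = j div d" by simp
  qed
qed

lemma block_supported_shift_invariant_eq_bdiag:
  assumes "0 < d" "d dvd L" "block_supported L d Z" "shift_invariant L Z d"
  shows "Z = bdiag (L div d) d (\<lambda>i j. if i < d \<and> j < d then Z i j else 0)"
proof (intro ext)
  fix i j
  have L: "L div d * d = L" using assms(2) by simp
  show "Z i j = bdiag (L div d) d (\<lambda>i j. if i < d \<and> j < d then Z i j else 0) i j"
  proof (cases "i < L \<and> j < L \<and> i div d = j div d")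
    case True
    define s where "s = i div d * d"
    have "s \<le> i" "s \<le> j" unfolding s_def using True by (metis div_times_less_eq_dividend)+
    have "d dvd L - s" unfolding s_def using assms(2) by (simp add: dvd_diff_nat)
    then have "Z ((i + (L - s)) mod L) ((j + (L - s)) mod L) = Z i j"
      using shift_invariant_dvd[OF assms(4)] True unfolding shift_invariant_def by blast
    moreover have "i - s = i mod d" unfolding s_def by (simp add: minus_div_mult_eq_mod)
    moreover have "j - s = j mod d" unfolding s_def using True by (simp add: minus_div_mult_eq_mod)
    ultimately have "Z i j = Z (i mod d) (j mod d)"
      using shift_mod_wrap[OF \<open>s \<le> i\<close>] shift_mod_wrap[OF \<open>s \<le> j\<close>] True by simp
    then show ?thesis using True assms(1) unfolding bdiag_def L by simp
  next
    case False
    then have "Z i j = 0" using assms(3) unfolding block_supported_def by blast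
    then show ?thesis using False unfolding bdiag_def L by auto
  qed
qed

lemma bdiag_eq_bdiag_refine:
  assumes "0 < M" "d dvd n" "X \<in> mats n" "bdiag M n X = bdiag (M * (n div d)) d Y"
  shows "X = bdiag (n div d) d Y"
proof (rule bdiag_inj)
  have "n = n div d * d" using assms(2) by simp
  then show "bdiag (n div d) d Y \<in> mats n" by (metis bdiag_in_mats)
  show "bdiag M n X = bdiag M n (bdiag (n div d) d Y)"
    using assms(4) bdiag_bdiag[of M "n div d" d Y] \<open>n = n div d * d\<close> by simp
qed (use assms in auto)

lemma bdiag_eq_imp_common_block:
  fixes X X' :: "nat \<Rightarrow> nat \<Rightarrow> 'w::zero"
  assumes "0 < n" "0 < n'" "0 < M" "X \<in> mats n" "X' \<in> mats n'"
    and "M * n = M' * n'" "bdiag M n X = bdiag M' n' X'"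
  shows "\<exists>d Y m m'. Y \<in> mats d \<and> n = m * d \<and> n' = m' * d \<and> X = bdiag m d Y \<and> X' = bdiag m' d Y"
proof -
  define L Z d where "L = M * n" and "Z = bdiag M n X" and "d = gcd n n'"
  define Y where "Y = (\<lambda>i j. if i < d \<and> j < d then Z i j else 0)"
  have "0 < M'" using assms(1,3,6) by (metis gr0I mult_is_0 less_irrefl)
  have "d dvd n" "d dvd n'" "0 < d" unfolding d_def using assms(1) by simp_all
  have Z': "Z = bdiag M' n' X'" and L': "L = M' * n'"
    unfolding Z_def L_def using assms(6,7) by simp_all
  have "n dvd L" "n' dvd L" unfolding L_def by (simp, metis L' L_def dvd_triv_right)
  have "shift_invariant L Z n"
    unfolding Z_def L_def by (rule shift_invariant_bdiag[OF assms(1)])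
  moreover have "shift_invariant L Z n'"
    unfolding Z' L' by (rule shift_invariant_bdiag[OF assms(2)])
  ultimately have inv: "shift_invariant L Z d"
    unfolding d_def using \<open>n' dvd L\<close> assms(1) by (intro shift_invariant_gcd) auto
  moreover have "block_supported L n Z" unfolding Z_def L_def by (rule block_supported_bdiag)
  moreover have "block_supported L n' Z" unfolding Z' L' by (rule block_supported_bdiag)
  ultimately have supp: "block_supported L d Z"
    unfolding d_def using \<open>n dvd L\<close> \<open>n' dvd L\<close> by (intro block_supported_gcd)
  have "Z = bdiag (L div d) d Y"
    unfolding Y_def using \<open>0 < d\<close> \<open>d dvd n\<close> \<open>n dvd L\<close> supp inv
    by (intro block_supported_shift_invariant_eq_bdiag) (auto intro: dvd_trans)
  then have "X = bdiag (n div d) d Y" "X' = bdiag (n' div d) d Y"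
    using bdiag_eq_bdiag_refine[OF assms(3) \<open>d dvd n\<close> assms(4)]
      bdiag_eq_bdiag_refine[OF \<open>0 < M'\<close> \<open>d dvd n'\<close> assms(5)]
      \<open>d dvd n\<close> \<open>d dvd n'\<close> Z_def Z' L_def L'
    by (simp_all add: div_mult_swap)
  moreover have "Y \<in> mats d" unfolding Y_def mats_def by simp
  ultimately show ?thesis using \<open>d dvd n\<close> \<open>d dvd n'\<close> by fastforce
qed

lemma common_block_imp_bdiag_eq:
  assumes "0 < d" "n = m * d" "n' = m' * d" "M * n = M' * n'"
  shows "bdiag M n (bdiag m d Y) = bdiag M' n' (bdiag m' d Y)"
proof -
  have "M * m = M' * m'" using assms by (simp add: mult.assoc)
  then show ?thesis unfolding assms(2,3) bdiag_bdiag by simp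
qed

lemma bdiag_eq_iff_common_block:
  fixes X X' :: "nat \<Rightarrow> nat \<Rightarrow> 'w::zero"
  assumes "0 < n" "0 < n'" "0 < M" "X \<in> mats n" "X' \<in> mats n'" "M * n = M' * n'"
  shows "bdiag M n X = bdiag M' n' X' \<longleftrightarrow>
    (\<exists>d Y m m'. Y \<in> mats d \<and> n = m * d \<and> n' = m' * d \<and> X = bdiag m d Y \<and> X' = bdiag m' d Y)"
proof
  assume "\<exists>d Y m m'. Y \<in> mats d \<and> n = m * d \<and> n' = m' * d \<and> X = bdiag m d Y \<and> X' = bdiag m' d Y"
  then obtain d Y m m' where "n = m * d" "n' = m' * d" "X = bdiag m d Y" "X' = bdiag m' d Y"
    by blast
  moreover have "0 < d" using \<open>n = m * d\<close> assms(1) by simp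
  ultimately show "bdiag M n X = bdiag M' n' X'"
    using common_block_imp_bdiag_eq assms(6) by blast
qed (use bdiag_eq_imp_common_block assms in blast)

lemma operator_space_norm_eq_0_iff:
  assumes "operator_space sc N" "X \<in> mats n"
  shows "N n X = 0 \<longleftrightarrow> X = (\<lambda>i j. 0)"
  using assms unfolding operator_space_def by blast

theorem proposition7p14:
  fixes sc :: "complex \<Rightarrow> 'w::banach \<Rightarrow> 'w"
    and N :: "nat \<Rightarrow> (nat \<Rightarrow> nat \<Rightarrow> 'w) \<Rightarrow> real"
    and X X' :: "nat \<Rightarrow> nat \<Rightarrow> 'w" and n n' M M' :: nat
  assumes "operator_space sc N"
    and "0 < n" and "0 < n'"
    and "X \<in> mats n" and "X' \<in> mats n'"
    and "M * n = M' * n'" and "M * n = lcm n n'"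
  shows "N (M * n) (\<lambda>i j. bdiag M n X i j - bdiag M' n' X' i j) = 0 \<longleftrightarrow>
    (\<exists>d Y m m'. Y \<in> mats d \<and> n = m * d \<and> n' = m' * d \<and>
        X = bdiag m d Y \<and> X' = bdiag m' d Y)"
proof -
  have "0 < M" using assms(2,3,7) by (metis lcm_pos_nat mult_is_0 gr0I less_irrefl)
  have "(\<lambda>i j. bdiag M n X i j - bdiag M' n' X' i j) \<in> mats (M * n)"
    using bdiag_in_mats[of M n X] bdiag_in_mats[of M' n' X'] assms(6) unfolding mats_def by simp
  then have "N (M * n) (\<lambda>i j. bdiag M n X i j - bdiag M' n' X' i j) = 0
      \<longleftrightarrow> bdiag M n X = bdiag M' n' X'"
    using operator_space_norm_eq_0_iff[OF assms(1)] by (simp add: fun_eq_iff)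
  also have "\<dots> \<longleftrightarrow> (\<exists>d Y m m'. Y \<in> mats d \<and> n = m * d \<and> n' = m' * d \<and>
        X = bdiag m d Y \<and> X' = bdiag m' d Y)"
    using bdiag_eq_iff_common_block[OF assms(2,3) \<open>0 < M\<close> assms(4-6)] .
  finally show ?thesis .
qed

end
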